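(* Let $P_1,\dots,P_5\in\mathbb{R}^3$, indices taken mod 5, satisfy $\det(P_{i-1},P_i,P_{i+1})=1$ for all $i$, and let $a_i,b_i$ (5-periodic) be the coefficients with $P_{i+2}=a_{i+1}P_{i+1}-b_iP_i+P_{i-1}$ for all $i$. Then for all $i$ (mod 5), $$b_i=a_{i+3},\qquad a_i+1=a_{i+2}a_{i+3}.$$
   Context: A polygon $(P_i)$ in $\mathbb{R}^3$ with $\det(P_{i-1},P_i,P_{i+1})=1$ for all $i$ is called unimodular; for such a polygon the vectors $P_{i-1},P_i,P_{i+1}$ form a basis, and the unimodularity forces the coefficient of $P_{i-1}$ in the expansion of $P_{i+2}$ to be $1$, so the recurrence $P_{i+2}=a_{i+1}P_{i+1}-b_iP_i+P_{i-1}$ defines the sequences $a_i,b_i$. *)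

theory Defs
  imports "HOL-Analysis.Analysis"
begin

text \<open>Determinant of the 3x3 matrix whose rows (equivalently columns, since
  the determinant is transpose-invariant) are the vectors u, v, w.\<close>
definition det3 :: "real^3 \<Rightarrow> real^3 \<Rightarrow> real^3 \<Rightarrow> real" where
  "det3 u v w = det (vector [u, v, w] :: real^3^3)"

end

theory Submission
  imports Defs
begin

text \<open>Expand everything in the basis \<open>P 0, P 1, P 2\<close>: the recurrence gives \<open>P 3\<close> and
  \<open>P 4\<close>, and running it twice more must return \<open>P 6 = P 1\<close> and \<open>P 7 = P 2\<close> by periodicity.
  Comparing coordinates, which are unique since the basis has determinant \<open>1\<close>, yields the
  relations. Shifting the indices reduces every \<open>i\<close> to \<open>i = 0\<close>.\<close>

lemma det3_expand:
  "det3 u v w = u$1 * v$2 * w$3 - u$1 * v$3 * w$2 - u$2 * v$1 * w$3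
              + u$2 * v$3 * w$1 + u$3 * v$1 * w$2 - u$3 * v$2 * w$1"
  unfolding det3_def det_3 by (simp add: vector_def algebra_simps)

lemma det3_lincomb_left: "det3 (x *\<^sub>R u + y *\<^sub>R v + z *\<^sub>R w) v w = x * det3 u v w"
  unfolding det3_expand by (simp add: algebra_simps)

lemma det3_lincomb_middle: "det3 u (x *\<^sub>R u + y *\<^sub>R v + z *\<^sub>R w) w = y * det3 u v w"
  unfolding det3_expand by (simp add: algebra_simps)

lemma det3_lincomb_right: "det3 u v (x *\<^sub>R u + y *\<^sub>R v + z *\<^sub>R w) = z * det3 u v w"
  unfolding det3_expand by (simp add: algebra_simps)

lemma lincomb_coords_unique:
  assumes "det3 u v w \<noteq> 0"
    and "x *\<^sub>R u + y *\<^sub>R v + z *\<^sub>R w = x' *\<^sub>R u + y' *\<^sub>R v + z' *\<^sub>R w"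
  shows "x = x'" "y = y'" "z = z'"
  using assms det3_lincomb_left[of x u y v z w] det3_lincomb_left[of x' u y' v z' w]
    det3_lincomb_middle[of u x y v z w] det3_lincomb_middle[of u x' y' v z' w]
    det3_lincomb_right[of u v x y z w] det3_lincomb_right[of u v x' y' z' w]
  by auto

lemma unimodular_pentagon_relations_at_0:
  fixes P :: "int \<Rightarrow> real^3" and a b :: "int \<Rightarrow> real"
  assumes P_per: "\<And>i. P (i + 5) = P i"
    and a_per: "\<And>i. a (i + 5) = a i"
    and b_per: "\<And>i. b (i + 5) = b i"
    and unimod: "\<And>i. det3 (P (i - 1)) (P i) (P (i + 1)) = 1"
    and recur: "\<And>i. P (i + 2) = a (i + 1) *\<^sub>R P (i + 1) - b i *\<^sub>R P i + P (i - 1)"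
  shows "b 0 = a 3 \<and> a 0 + 1 = a 2 * a 3"
proof -
  have basis: "det3 (P 0) (P 1) (P 2) \<noteq> 0"
    using unimod[of 1] by simp
  have P3: "P 3 = P 0 - b 1 *\<^sub>R P 1 + a 2 *\<^sub>R P 2"
    using recur[of 1] by simp
  have P4: "P 4 = a 3 *\<^sub>R P 0 + (1 - a 3 * b 1) *\<^sub>R P 1 + (a 2 * a 3 - b 2) *\<^sub>R P 2"
    using recur[of 2] P3 by (simp add: algebra_simps)
  have P6: "P 1 = a 0 *\<^sub>R P 0 - b 4 *\<^sub>R P 4 + P 3"
    using recur[of 4] P_per[of 0] P_per[of 1] a_per[of 0] by simp
  have P7: "P 2 = a 1 *\<^sub>R P 1 - b 0 *\<^sub>R P 0 + P 4"
    using recur[of 5] P_per[of 0] P_per[of 1] P_per[of 2] a_per[of 1] b_per[of 0] by simp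
  have "0 *\<^sub>R P 0 + 0 *\<^sub>R P 1 + 1 *\<^sub>R P 2
      = (a 3 - b 0) *\<^sub>R P 0 + (a 1 + 1 - a 3 * b 1) *\<^sub>R P 1 + (a 2 * a 3 - b 2) *\<^sub>R P 2"
    using P7 P4 by (simp add: algebra_simps)
  from lincomb_coords_unique[OF basis this]
  have b0: "b 0 = a 3" and b2: "a 2 * a 3 - b 2 = 1" by auto
  have "0 *\<^sub>R P 0 + 1 *\<^sub>R P 1 + 0 *\<^sub>R P 2
      = (a 0 - b 4 * a 3 + 1) *\<^sub>R P 0 + (- b 4 * (1 - a 3 * b 1) - b 1) *\<^sub>R P 1
        + (a 2 - b 4 * (a 2 * a 3 - b 2)) *\<^sub>R P 2"
    using P6 P4 P3 by (simp add: algebra_simps)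
  from lincomb_coords_unique[OF basis this] b2
  have "a 0 - b 4 * a 3 + 1 = 0" "b 4 = a 2" by auto
  with b0 show ?thesis by (simp add: algebra_simps)
qed

theorem lemma2p1:
  fixes P :: "int \<Rightarrow> real^3" and a b :: "int \<Rightarrow> real"
  assumes P_per: "\<And>i. P (i + 5) = P i"
    and a_per: "\<And>i. a (i + 5) = a i"
    and b_per: "\<And>i. b (i + 5) = b i"
    and unimod: "\<And>i. det3 (P (i - 1)) (P i) (P (i + 1)) = 1"
    and recur: "\<And>i. P (i + 2) = a (i + 1) *\<^sub>R P (i + 1) - b i *\<^sub>R P i + P (i - 1)"
  shows "\<forall>i. b i = a (i + 3) \<and> a i + 1 = a (i + 2) * a (i + 3)"
proof
  fix i
  have "b (i + 0) = a (i + 3) \<and> a (i + 0) + 1 = a (i + 2) * a (i + 3)"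
  proof (rule unimodular_pentagon_relations_at_0)
    fix k
    show "P (i + (k + 5)) = P (i + k)" using P_per[of "i + k"] by (simp add: add.assoc)
    show "a (i + (k + 5)) = a (i + k)" using a_per[of "i + k"] by (simp add: add.assoc)
    show "b (i + (k + 5)) = b (i + k)" using b_per[of "i + k"] by (simp add: add.assoc)
    show "det3 (P (i + (k - 1))) (P (i + k)) (P (i + (k + 1))) = 1"
      using unimod[of "i + k"] by (simp add: algebra_simps)
    show "P (i + (k + 2)) = a (i + (k + 1)) *\<^sub>R P (i + (k + 1)) - b (i + k) *\<^sub>R P (i + k)
        + P (i + (k - 1))"
      using recur[of "i + k"] by (simp add: algebra_simps)
  qed
  then show "b i = a (i + 3) \<and> a i + 1 = a (i + 2) * a (i + 3)" by simp
qed

end
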